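(* Let $n,d,m$ be positive integers with $d$ odd and $\delta=n/d$ a positive integer, and let $X\in\mathbb{R}^{m\times n}$ be any matrix whose $k$-th row is the data vector $\mathbf{x}^{(0,k)}$, $k=1,\dots,m$. Consider the 1-hidden layer treelike committee machine sign perceptron network $A([n,d,1];\mathrm{sign})$, and the data set $(\mathbf{x}^{(0,k)},1)_{k=1}^m$ (all labels equal to $1$). For $j=1,\dots,d$ let $\mathcal{S}^{(j)}=\{(j-1)\delta+1,\dots,j\delta\}$ and $X^{(j)}=X_{:,\mathcal{S}^{(j)}}\in\mathbb{R}^{m\times\delta}$. Define $$f_{rp}(X)=\frac{1}{\sqrt n}\min_{\mathbf{z}^{(j)}\in\mathbb{R}^\delta,\ \|\mathbf{z}^{(j)}\|_2=1\ (1\le j\le d),\ Q\in\mathbb{R}^{m\times d}}\ \max_{\Lambda\in\mathbb{R}^{m\times d}}\Big(\|\mathbf{1}-\mathrm{sign}(\mathrm{sign}(Q)\mathbf{1})\|_2+\sum_{j=1}^d(\Lambda_{:,j})^TX^{(j)}\mathbf{z}^{(j)}-\mathrm{tr}(\Lambda^TQ)\Big).$$ If $f_{rp}(X)>0$, then the data set $(\mathbf{x}^{(0,k)},1)_{k=1}^m$ cannot be properly memorized by the network.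
   Context: The network $A([n,d,1];\mathrm{sign})$ (treelike committee machine, TCM): an input $\mathbf{x}\in\mathbb{R}^n$ is mapped to the output $\mathrm{sign}(\mathbf{1}^T\mathrm{sign}(W\mathbf{x}))$, where $\mathbf{1}$ is the all-ones vector, $\mathrm{sign}$ acts componentwise, and $W\in\mathbb{R}^{d\times n}$ is a weight matrix with treelike sparsity: the nonzero entries of row $j$ of $W$ lie only in the columns $\mathcal{S}^{(j)}=\{(j-1)\delta+1,\dots,j\delta\}$. The data set $(\mathbf{x}^{(0,k)},y^{(0,k)})_{k=1}^m$ is properly memorized if there exists such a $W$ with $\mathrm{sign}(\mathbf{1}^T\mathrm{sign}(W\mathbf{x}^{(0,k)}))=y^{(0,k)}$ for all $k$. For a matrix $Q$, $\mathrm{sign}(Q)$ is applied entrywise and $\mathrm{sign}(Q)\mathbf{1}$ is the vector of row sums of $\mathrm{sign}(Q)$; $\Lambda_{:,j}$ denotes the $j$-th column of $\Lambda$. *)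

theory Defs
  imports Complex_Main "HOL-Library.Extended_Real"
begin

text \<open>Sign function with values in {-1,1}; convention sign(0) = -1.\<close>
definition sgnpm :: "real \<Rightarrow> real" where
  "sgnpm x = (if x > 0 then 1 else -1)"

text \<open>Indices are 0-based: rows k < m, columns i < n, hidden units j < d.
  Block j of the treelike architecture is the column set {j*delta ..< (j+1)*delta}.\<close>
definition tree_block :: "nat \<Rightarrow> nat \<Rightarrow> nat set" where
  "tree_block delta j = {j * delta ..< (j + 1) * delta}"

definition tcm_out :: "nat \<Rightarrow> nat \<Rightarrow> (nat \<Rightarrow> nat \<Rightarrow> real) \<Rightarrow> (nat \<Rightarrow> real) \<Rightarrow> real" where
  "tcm_out n d W x = sgnpm (\<Sum>j<d. sgnpm (\<Sum>i<n. W j i * x i))"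

definition properly_memorized ::
  "nat \<Rightarrow> nat \<Rightarrow> nat \<Rightarrow> nat \<Rightarrow> (nat \<Rightarrow> nat \<Rightarrow> real) \<Rightarrow> (nat \<Rightarrow> real) \<Rightarrow> bool" where
  "properly_memorized n d delta m X y \<longleftrightarrow>
     (\<exists>W :: nat \<Rightarrow> nat \<Rightarrow> real.
        (\<forall>j<d. \<forall>i<n. i \<notin> tree_block delta j \<longrightarrow> W j i = 0) \<and>
        (\<forall>k<m. tcm_out n d W (X k) = y k))"

text \<open>The objective inside min-max: z j i (j<d, i<delta) are the blocks z^(j),
  Q k j and Lam k j are m x d matrices, X k i is the data matrix (row k = x^(0,k)).\<close>
definition frp_obj ::
  "nat \<Rightarrow> nat \<Rightarrow> nat \<Rightarrow> (nat \<Rightarrow> nat \<Rightarrow> real) \<Rightarrow> (nat \<Rightarrow> nat \<Rightarrow> real)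
     \<Rightarrow> (nat \<Rightarrow> nat \<Rightarrow> real) \<Rightarrow> (nat \<Rightarrow> nat \<Rightarrow> real) \<Rightarrow> real" where
  "frp_obj d delta m X z Q Lam =
     sqrt (\<Sum>k<m. (1 - sgnpm (\<Sum>j<d. sgnpm (Q k j)))\<^sup>2)
     + (\<Sum>j<d. \<Sum>k<m. Lam k j * (\<Sum>i<delta. X k (j * delta + i) * z j i))
     - (\<Sum>k<m. \<Sum>j<d. Lam k j * Q k j)"

text \<open>f_rp(X), valued in the extended reals since the inner max may be +infinity;
  min / max are rendered as Inf / Sup.\<close>
definition f_rp :: "nat \<Rightarrow> nat \<Rightarrow> nat \<Rightarrow> nat \<Rightarrow> (nat \<Rightarrow> nat \<Rightarrow> real) \<Rightarrow> ereal" where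
  "f_rp n d delta m X =
     ereal (1 / sqrt (real n)) *
     (INF (z, Q) \<in> {(z, Q). \<forall>j<d. (\<Sum>i<delta. (z j i)\<^sup>2) = 1}.
        SUP Lam \<in> (UNIV :: (nat \<Rightarrow> nat \<Rightarrow> real) set). ereal (frp_obj d delta m X z Q Lam))"

end

theory Submission
  imports Defs
begin

text \<open>Given a treelike \<open>W\<close> memorizing the data, rescale each nonzero block row to a unit vector
  \<open>z\<^sub>j\<close> and replace each zero row by a unit vector: no hidden sign decreases (\<open>sgnpm 0 = -1\<close>), so
  every sample is still classified as \<open>1\<close>. Taking \<open>Q\<^sub>k\<^sub>j = X\<^sub>j z\<^sub>j\<close> on row \<open>k\<close>, the Lagrangian terms cancel
  for every \<open>\<Lambda>\<close> and the error term is \<open>0\<close>, hence \<open>f\<^sub>r\<^sub>p(X) \<le> 0\<close>.\<close>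

lemma ereal_mult_nonpos: "a \<ge> 0 \<Longrightarrow> (b::ereal) \<le> 0 \<Longrightarrow> ereal a * b \<le> 0"
  by (cases b) (auto simp: mult_nonneg_nonpos)

lemma sgnpm_divide_pos: "c > 0 \<Longrightarrow> sgnpm (x / c) = sgnpm x"
  by (simp add: sgnpm_def zero_less_divide_iff)

lemma sgnpm_zero_le: "sgnpm 0 \<le> sgnpm x"
  by (simp add: sgnpm_def)

lemma sum_tree_block:
  fixes f :: "nat \<Rightarrow> real"
  assumes "j < d" "n = d * delta" "\<forall>i<n. i \<notin> tree_block delta j \<longrightarrow> f i = 0"
  shows "(\<Sum>i<n. f i) = (\<Sum>i<delta. f (j * delta + i))"
proof -
  have "(j + 1) * delta \<le> d * delta"
    using assms(1) by (intro mult_right_mono) auto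
  then have "tree_block delta j \<subseteq> {..<n}"
    using assms(2) by (auto simp: tree_block_def)
  then have "(\<Sum>i<n. f i) = (\<Sum>i\<in>tree_block delta j. f i)"
    using assms(3) by (intro sum.mono_neutral_right) auto
  also have "tree_block delta j = (\<lambda>i. j * delta + i) ` {..<delta}"
  proof (rule set_eqI, rule iffI)
    fix x assume "x \<in> tree_block delta j"
    then show "x \<in> (\<lambda>i. j * delta + i) ` {..<delta}"
      by (intro image_eqI[of _ _ "x - j * delta"]) (auto simp: tree_block_def)
  qed (auto simp: tree_block_def)
  finally show ?thesis
    by (simp add: sum.reindex)
qed

lemma exists_unit_vector_sgnpm_ge:
  fixes w :: "nat \<Rightarrow> real"
  assumes "delta > 0"
  obtains z where "(\<Sum>i<delta. (z i)\<^sup>2) = 1"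
    and "\<And>x. sgnpm (\<Sum>i<delta. x i * w i) \<le> sgnpm (\<Sum>i<delta. x i * z i)"
proof (cases "\<forall>i<delta. w i = 0")
  case True
  let ?z = "\<lambda>i. if i = 0 then 1 else 0 :: real"
  have "(\<Sum>i<delta. (?z i)\<^sup>2) = (\<Sum>i<delta. if i = 0 then 1 else 0)"
    by (intro sum.cong) auto
  also have "\<dots> = 1"
    using assms by simp
  finally have "(\<Sum>i<delta. (?z i)\<^sup>2) = 1" .
  moreover have "sgnpm (\<Sum>i<delta. x i * w i) \<le> sgnpm (\<Sum>i<delta. x i * ?z i)" for x
    using True sgnpm_zero_le by simp
  ultimately show ?thesis
    by (rule that)
next
  case False
  define N where "N = sqrt (\<Sum>i<delta. (w i)\<^sup>2)"
  have "(\<Sum>i<delta. (w i)\<^sup>2) \<noteq> 0"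
    using False by (subst sum_nonneg_eq_0_iff) auto
  then have N_pos: "N > 0"
    unfolding N_def by (simp add: sum_nonneg order_neq_le_trans)
  have "(\<Sum>i<delta. (w i / N)\<^sup>2) = (\<Sum>i<delta. (w i)\<^sup>2) / N\<^sup>2"
    by (simp add: power_divide sum_divide_distrib)
  also have "\<dots> = 1"
    using N_pos unfolding N_def by (simp add: sum_nonneg)
  finally have "(\<Sum>i<delta. (w i / N)\<^sup>2) = 1" .
  moreover have "sgnpm (\<Sum>i<delta. x i * w i) \<le> sgnpm (\<Sum>i<delta. x i * (w i / N))" for x
  proof -
    have "(\<Sum>i<delta. x i * (w i / N)) = (\<Sum>i<delta. x i * w i) / N"
      by (simp add: sum_divide_distrib)
    then show ?thesis
      using N_pos by (simp add: sgnpm_divide_pos)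
  qed
  ultimately show ?thesis
    by (rule that)
qed

lemma properly_memorized_imp_unit_blocks:
  assumes "delta > 0" "n = d * delta" "properly_memorized n d delta m X (\<lambda>k. 1)"
  obtains z where "\<forall>j<d. (\<Sum>i<delta. (z j i)\<^sup>2) = 1"
    and "\<And>k. k < m \<Longrightarrow> (\<Sum>j<d. sgnpm (\<Sum>i<delta. X k (j * delta + i) * z j i)) > 0"
proof -
  obtain W where W_tree: "\<forall>j<d. \<forall>i<n. i \<notin> tree_block delta j \<longrightarrow> W j i = 0"
    and W_out: "\<forall>k<m. tcm_out n d W (X k) = 1"
    using assms(3) unfolding properly_memorized_def by blast
  have "\<forall>j. \<exists>z. (\<Sum>i<delta. (z i)\<^sup>2) = 1 \<and>
      (\<forall>x. sgnpm (\<Sum>i<delta. x i * W j (j * delta + i)) \<le> sgnpm (\<Sum>i<delta. x i * z i))"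
  proof
    fix j
    obtain z where "(\<Sum>i<delta. (z i)\<^sup>2) = 1"
      and "\<And>x. sgnpm (\<Sum>i<delta. x i * W j (j * delta + i)) \<le> sgnpm (\<Sum>i<delta. x i * z i)"
      using exists_unit_vector_sgnpm_ge[OF assms(1), of "\<lambda>i. W j (j * delta + i)"] by blast
    then show "\<exists>z. (\<Sum>i<delta. (z i)\<^sup>2) = 1 \<and>
      (\<forall>x. sgnpm (\<Sum>i<delta. x i * W j (j * delta + i)) \<le> sgnpm (\<Sum>i<delta. x i * z i))"
      by blast
  qed
  then obtain z where z_unit: "\<And>j. (\<Sum>i<delta. (z j i)\<^sup>2) = 1"
    and z_sgnpm: "\<And>j x. sgnpm (\<Sum>i<delta. x i * W j (j * delta + i))
                        \<le> sgnpm (\<Sum>i<delta. x i * z j i)"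
    by (auto dest!: choice)
  have "(\<Sum>j<d. sgnpm (\<Sum>i<delta. X k (j * delta + i) * z j i)) > 0" if "k < m" for k
  proof -
    have "sgnpm (\<Sum>j<d. sgnpm (\<Sum>i<n. W j i * X k i)) = 1"
      using W_out that by (simp add: tcm_out_def)
    then have "0 < (\<Sum>j<d. sgnpm (\<Sum>i<n. W j i * X k i))"
      by (simp add: sgnpm_def split: if_splits)
    also have "\<dots> = (\<Sum>j<d. sgnpm (\<Sum>i<delta. X k (j * delta + i) * W j (j * delta + i)))"
      using W_tree assms(2) by (intro sum.cong refl) (simp add: sum_tree_block mult.commute)
    also have "\<dots> \<le> (\<Sum>j<d. sgnpm (\<Sum>i<delta. X k (j * delta + i) * z j i))"
      by (intro sum_mono z_sgnpm)
    finally show ?thesis .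
  qed
  with z_unit show ?thesis
    using that by blast
qed

lemma frp_obj_block_products:
  "frp_obj d delta m X z (\<lambda>k j. \<Sum>i<delta. X k (j * delta + i) * z j i) Lam
     = sqrt (\<Sum>k<m. (1 - sgnpm (\<Sum>j<d. sgnpm (\<Sum>i<delta. X k (j * delta + i) * z j i)))\<^sup>2)"
  unfolding frp_obj_def by (simp add: sum.swap[of _ "{..<d}"])

lemma f_rp_nonpos_if_unit_blocks_classify:
  assumes "\<forall>j<d. (\<Sum>i<delta. (z j i)\<^sup>2) = 1"
    and "\<And>k. k < m \<Longrightarrow> (\<Sum>j<d. sgnpm (\<Sum>i<delta. X k (j * delta + i) * z j i)) > 0"
  shows "f_rp n d delta m X \<le> 0"
proof -
  let ?Q = "\<lambda>k j. \<Sum>i<delta. X k (j * delta + i) * z j i"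
  have "frp_obj d delta m X z ?Q Lam = 0" for Lam
    using assms(2) by (simp add: frp_obj_block_products sgnpm_def)
  then have "(INF (z, Q) \<in> {(z, Q). \<forall>j<d. (\<Sum>i<delta. (z j i)\<^sup>2) = 1}.
        SUP Lam \<in> (UNIV :: (nat \<Rightarrow> nat \<Rightarrow> real) set). ereal (frp_obj d delta m X z Q Lam)) \<le> 0"
    using assms(1) by (intro INF_lower2[of "(z, ?Q)"]) auto
  moreover have "ereal (1 / sqrt (real n)) \<ge> 0"
    by simp
  ultimately show ?thesis
    unfolding f_rp_def by (simp add: ereal_mult_nonpos)
qed

theorem lemma1:
  fixes n d m delta :: nat and X :: "nat \<Rightarrow> nat \<Rightarrow> real"
  assumes "n > 0" "d > 0" "m > 0" "odd d" "delta > 0" "n = d * delta"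
    and "f_rp n d delta m X > 0"
  shows "\<not> properly_memorized n d delta m X (\<lambda>k. 1)"
proof
  assume "properly_memorized n d delta m X (\<lambda>k. 1)"
  with assms(5,6) obtain z where "\<forall>j<d. (\<Sum>i<delta. (z j i)\<^sup>2) = 1"
    and "\<And>k. k < m \<Longrightarrow> (\<Sum>j<d. sgnpm (\<Sum>i<delta. X k (j * delta + i) * z j i)) > 0"
    using properly_memorized_imp_unit_blocks by blast
  then have "f_rp n d delta m X \<le> 0"
    by (rule f_rp_nonpos_if_unit_blocks_classify)
  with assms(7) show False
    by simp
qed

end
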